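(* Let $f$ be the solution of the radial Loewner PDE $$\frac{\partial f}{\partial t}(z,t)=-z f'(z,t)\,\frac{e^{it}+z}{e^{it}-z},\qquad f(z,0)=z,\quad (z,t)\in\mathbb{D}\times[0,\infty),$$ which is given by $f(z,t)=\phi^{-1}(e^{(i-1)t}\phi(e^{-it}z))$ with $\phi(z)=z(z-i)^{i-1}$ (a univalent function on $\mathbb{D}$). Let $\gamma(t):=f(e^{it},t)$, $t\ge0$, be the trace of the tip point (the boundary value of $f(\cdot,t)$ at $e^{it}$, equivalently $\gamma(t)=\phi^{-1}(e^{(i-1)t}\phi(1))$), and write $\gamma(t)=r(t)e^{i\Theta(t)}$ with $\Theta$ continuous and $\Theta(0)=0$. Then $r$ is decreasing with $r(t)\to0$ as $t\to\infty$, and $\Theta$ is increasing (with $\Theta'(t)>0$ for $t>0$) and $\Theta(t)\to\infty$ as $t\to\infty$; i.e. $\gamma$ spirals about the origin.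
   Context: $\mathbb{D}$ is the unit disc; $f'$ denotes $\partial f/\partial z$. The power $(z-i)^{i-1}$ is defined via a holomorphic branch of $\log(z-i)$ on $\mathbb{D}$. *)

theory Defs
  imports "HOL-Analysis.Analysis"
begin

text \<open>phi z = z (z - i)^(i - 1), using the principal branch of log(z - i),
  which is holomorphic on the unit disc (z - i is never a non-positive real there)
  and also defined at the boundary point 1.\<close>
definition phi :: "complex \<Rightarrow> complex" where
  "phi z = z * exp ((\<i> - 1) * Ln (z - \<i>))"

definition gamma :: "real \<Rightarrow> complex" where
  "gamma t = (if t = 0 then 1
              else inv_into (ball 0 1) phi (exp ((\<i> - 1) * complex_of_real t) * phi 1))"

end

theory Submission
  imports Defs "HOL-Complex_Analysis.Complex_Analysis"
begin

text \<open>Writing \<open>z = e^\<zeta>\<close>, the map \<open>log phi (e^\<zeta>) = \<zeta> + (\<i> - 1) log (e^\<zeta> - \<i>)\<close> has a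
  derivative with positive real part after rotation by \<open>1 + \<i>\<close> (\<open>phi\<close> is spirallike), so \<open>phi\<close> is
  univalent on the disc. On the unit circle \<open>|phi|\<close> is minimal exactly at \<open>1\<close>; a connectedness
  argument then shows that every \<open>e^{(\<i> - 1) t} phi 1\<close>, \<open>t > 0\<close>, is attained in the disc, at a point
  \<open>gamma t\<close> depending smoothly on \<open>t\<close>. Taking logarithms, \<open>gamma = exp E\<close> with
  \<open>E t = (\<i> - 1) (t + log (1 - \<i>) - log (gamma t - \<i>))\<close> and \<open>E' = (\<i> - 1) + 2 gamma / (gamma - 1)\<close>.
  Now \<open>Re E' < 0\<close> because \<open>|gamma| < 1\<close>, and \<open>Im E' > 0\<close> because \<open>gamma\<close> lies on a level set
  of \<open>ln |w| + arg w - 2 arg (w - \<i>)\<close> which avoids the disc \<open>|w - 1 - \<i>| \<le> 1\<close>. As \<open>arg (gamma - \<i>)\<close>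
  is bounded, \<open>Re E \<le> C - t\<close> and \<open>Im E \<ge> t - C\<close>; finally every continuous argument \<open>\<Theta>\<close>
  with \<open>\<Theta> 0 = 0\<close> equals \<open>Im E\<close>.\<close>

section \<open>Univalence of \<open>phi\<close>\<close>

lemma Im_less_1_if_norm_le_1:
  assumes "norm z \<le> 1" "z \<noteq> \<i>"
  shows "Im z < 1"
proof (rule ccontr)
  assume "\<not> Im z < 1"
  with abs_Im_le_cmod[of z] assms(1) have Im: "Im z = 1" by linarith
  have "(Re z)\<^sup>2 + (Im z)\<^sup>2 \<le> 1"
    using assms(1) by (metis cmod_power2 power_le_one_iff norm_ge_zero)
  with Im have "Re z = 0" by simp
  with Im assms(2) show False by (simp add: complex_eq_iff)
qed

lemma minus_i_notin_nonpos_Reals: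
  assumes "norm z \<le> 1" "z \<noteq> \<i>"
  shows "z - \<i> \<notin> \<real>\<^sub>\<le>\<^sub>0"
  using Im_less_1_if_norm_le_1[OF assms] by (auto simp: complex_nonpos_Reals_iff)

lemma minus_i_notin_nonpos_Reals_ball: "z \<in> ball 0 1 \<Longrightarrow> z - \<i> \<notin> \<real>\<^sub>\<le>\<^sub>0"
  by (rule minus_i_notin_nonpos_Reals) auto

definition phi' :: "complex \<Rightarrow> complex" where
  "phi' z = exp ((\<i> - 1) * Ln (z - \<i>)) * (1 + (\<i> - 1) * z / (z - \<i>))"

lemma has_field_derivative_phi:
  assumes "z - \<i> \<notin> \<real>\<^sub>\<le>\<^sub>0"
  shows "(phi has_field_derivative phi' z) (at z)"
proof -
  have "z - \<i> \<noteq> 0" using assms by auto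
  show ?thesis unfolding phi_def[abs_def] phi'_def
    by (rule derivative_eq_intros refl assms | use \<open>z - \<i> \<noteq> 0\<close> in \<open>simp add: field_simps\<close>)+
qed

lemma holomorphic_on_phi: "phi holomorphic_on ball 0 1"
  using has_field_derivative_phi minus_i_notin_nonpos_Reals_ball
  by (metis holomorphic_on_def field_differentiable_at_within field_differentiable_def)

lemma isCont_phi: "norm z \<le> 1 \<Longrightarrow> z \<noteq> \<i> \<Longrightarrow> isCont phi z"
  using has_field_derivative_phi[OF minus_i_notin_nonpos_Reals] DERIV_isCont by blast

lemma phi_eq_0_iff [simp]: "phi z = 0 \<longleftrightarrow> z = 0"
  by (simp add: phi_def)

lemma has_vector_derivative_Re:
  assumes "(f has_vector_derivative f') F"
  shows "((\<lambda>x. Re (f x)) has_real_derivative Re f') F"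
proof -
  have "((\<lambda>x. Re (f x)) has_derivative (\<lambda>x. Re (x *\<^sub>R f'))) F"
    using has_derivative_Re assms unfolding has_vector_derivative_def by blast
  moreover have "(\<lambda>x. Re (x *\<^sub>R f')) = (*) (Re f')" by (auto simp: fun_eq_iff)
  ultimately show ?thesis by (simp add: has_field_derivative_def)
qed

lemma has_vector_derivative_Im:
  assumes "(f has_vector_derivative f') F"
  shows "((\<lambda>x. Im (f x)) has_real_derivative Im f') F"
proof -
  have "((\<lambda>x. Im (f x)) has_derivative (\<lambda>x. Im (x *\<^sub>R f'))) F"
    using has_derivative_Im assms unfolding has_vector_derivative_def by blast
  moreover have "(\<lambda>x. Im (x *\<^sub>R f')) = (*) (Im f')" by (auto simp: fun_eq_iff)
  ultimately show ?thesis by (simp add: has_field_derivative_def)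
qed

lemma inj_on_if_Re_deriv_pos:
  fixes f :: "complex \<Rightarrow> complex"
  assumes S: "convex S"
    and deriv: "\<And>z. z \<in> S \<Longrightarrow> (f has_field_derivative f' z) (at z)"
    and pos: "\<And>z. z \<in> S \<Longrightarrow> Re (c * f' z) > 0"
  shows "inj_on f S"
proof (rule inj_onI, rule ccontr)
  fix a b assume a: "a \<in> S" and b: "b \<in> S" and eq: "f a = f b" and "a \<noteq> b"
  define d where "d = b - a"
  have "d \<noteq> 0" using \<open>a \<noteq> b\<close> by (simp add: d_def)
  define g where "g s = Re (c * f (a + of_real s * d) / d)" for s :: real
  have on_segment: "a + of_real s * d \<in> S" if "0 \<le> s" "s \<le> 1" for s :: real
    using convexD[OF S a b, of "1 - s" s] that
    by (simp add: d_def scaleR_conv_of_real algebra_simps)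
  have g': "(g has_real_derivative Re (c * f' (a + of_real s * d))) (at s)"
    if "0 \<le> s" "s \<le> 1" for s :: real
  proof -
    have "((\<lambda>z. a + z * d) has_field_derivative d) (at (of_real s))"
      by (auto intro!: derivative_eq_intros)
    then have "((f \<circ> (\<lambda>z. a + z * d)) has_field_derivative f' (a + of_real s * d) * d) (at (of_real s))"
      using deriv[OF on_segment[OF that]] by (intro DERIV_chain) simp_all
    then have "((\<lambda>z. c * f (a + z * d) / d) has_field_derivative
        c * (f' (a + of_real s * d) * d) / d) (at (of_real s))"
      unfolding o_def by (intro DERIV_cdivide DERIV_cmult)
    then have "((\<lambda>x. c * f (a + of_real x * d) / d) has_vector_derivative
        c * f' (a + of_real s * d)) (at s)"
      using \<open>d \<noteq> 0\<close> by (auto dest: has_vector_derivative_real_field)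
    then show ?thesis unfolding g_def by (rule has_vector_derivative_Re)
  qed
  have "g 0 < g 1"
  proof (rule DERIV_pos_imp_increasing[OF zero_less_one])
    fix s :: real assume "0 \<le> s" "s \<le> 1"
    then show "\<exists>y. DERIV g s :> y \<and> y > 0" using g' pos on_segment by blast
  qed
  moreover have "g 0 = g 1" using eq by (simp add: g_def d_def)
  ultimately show False by simp
qed

definition log_phi_exp :: "complex \<Rightarrow> complex" where
  "log_phi_exp \<zeta> = \<zeta> + (\<i> - 1) * Ln (exp \<zeta> - \<i>)"

lemma phi_exp: "phi (exp \<zeta>) = exp (log_phi_exp \<zeta>)"
  by (simp add: phi_def log_phi_exp_def exp_add)

lemma log_phi_exp_add_2pi:
  "log_phi_exp (\<zeta> + of_int (2 * n) * pi * \<i>) = log_phi_exp \<zeta> + of_int (2 * n) * pi * \<i>"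
proof -
  have "exp (\<zeta> + of_int (2 * n) * pi * \<i>) = exp \<zeta>"
    by (metis exp_eq)
  then show ?thesis by (simp add: log_phi_exp_def)
qed

lemma has_field_derivative_log_phi_exp:
  assumes "Re \<zeta> < 0"
  shows "(log_phi_exp has_field_derivative 1 + (\<i> - 1) * exp \<zeta> / (exp \<zeta> - \<i>)) (at \<zeta>)"
proof -
  have "exp \<zeta> - \<i> \<notin> \<real>\<^sub>\<le>\<^sub>0"
    using assms by (intro minus_i_notin_nonpos_Reals_ball) simp
  then have "((Ln \<circ> (\<lambda>z. exp z - \<i>)) has_field_derivative inverse (exp \<zeta> - \<i>) * exp \<zeta>) (at \<zeta>)"
    by (intro DERIV_chain) (auto intro!: has_field_derivative_Ln derivative_eq_intros)
  then have "((\<lambda>z. z + (\<i> - 1) * Ln (exp z - \<i>)) has_field_derivative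
      1 + (\<i> - 1) * (inverse (exp \<zeta> - \<i>) * exp \<zeta>)) (at \<zeta>)"
    unfolding o_def by (intro DERIV_add DERIV_ident DERIV_cmult)
  then show ?thesis by (simp add: log_phi_exp_def[abs_def] divide_inverse mult_ac)
qed

text \<open>Since \<open>1 + (\<i> - 1) z / (z - \<i>) = z phi' z / phi z\<close>, this says that \<open>phi\<close> is spirallike.\<close>
lemma Re_rotated_spirallike_quotient_pos:
  assumes "norm z < 1"
  shows "Re ((1 + \<i>) * (1 + (\<i> - 1) * z / (z - \<i>))) > 0"
proof -
  have "z - \<i> \<noteq> 0" using assms by auto
  have eq: "(1 + \<i>) * (1 + (\<i> - 1) * z / (z - \<i>)) = (\<i> - 1) * (z - 1) / (z - \<i>)"
    using \<open>z - \<i> \<noteq> 0\<close> by (simp add: divide_simps) (simp add: algebra_simps)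
  have "(Re z)\<^sup>2 + (Im z)\<^sup>2 < 1" using assms
    by (metis cmod_power2 power_strict_mono norm_ge_zero one_power2 zero_less_numeral)
  moreover have "(Re (z - \<i>))\<^sup>2 + (Im (z - \<i>))\<^sup>2 > 0" using \<open>z - \<i> \<noteq> 0\<close>
    by (metis cmod_power2 zero_less_norm_iff zero_less_power)
  moreover have "Re ((\<i> - 1) * (z - 1) / (z - \<i>))
      = (1 - (Re z)\<^sup>2 - (Im z)\<^sup>2) / ((Re (z - \<i>))\<^sup>2 + (Im (z - \<i>))\<^sup>2)"
    unfolding Re_divide by simp (simp add: algebra_simps power2_eq_square)
  ultimately show ?thesis unfolding eq by simp
qed

lemma inj_on_log_phi_exp: "inj_on log_phi_exp {\<zeta>. Re \<zeta> < 0}"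
proof (rule inj_on_if_Re_deriv_pos[where c = "1 + \<i>"
    and f' = "\<lambda>\<zeta>. 1 + (\<i> - 1) * exp \<zeta> / (exp \<zeta> - \<i>)"])
  fix \<zeta> assume "\<zeta> \<in> {\<zeta>. Re \<zeta> < 0}"
  then have "Re \<zeta> < 0" by simp
  then show "(log_phi_exp has_field_derivative 1 + (\<i> - 1) * exp \<zeta> / (exp \<zeta> - \<i>)) (at \<zeta>)"
    by (rule has_field_derivative_log_phi_exp)
  show "Re ((1 + \<i>) * (1 + (\<i> - 1) * exp \<zeta> / (exp \<zeta> - \<i>))) > 0"
    using \<open>Re \<zeta> < 0\<close> by (intro Re_rotated_spirallike_quotient_pos) simp
qed (rule convex_halfspace_Re_lt)

lemma inj_on_phi: "inj_on phi (ball 0 1)"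
proof (rule inj_onI)
  fix z w assume z: "z \<in> ball 0 1" and w: "w \<in> ball 0 1" and eq: "phi z = phi w"
  show "z = w"
  proof (cases "z = 0 \<or> w = 0")
    case True
    then show ?thesis using eq by (metis phi_eq_0_iff)
  next
    case False
    then have "Re (Ln z) < 0" "Re (Ln w) < 0" using z w by auto
    moreover have "exp (log_phi_exp (Ln z)) = exp (log_phi_exp (Ln w))"
      using eq False by (simp flip: phi_exp)
    then obtain n :: int
      where "log_phi_exp (Ln z) = log_phi_exp (Ln w) + of_int (2 * n) * pi * \<i>"
      using exp_eq by blast
    then have "log_phi_exp (Ln z) = log_phi_exp (Ln w + of_int (2 * n) * pi * \<i>)"
      by (simp only: log_phi_exp_add_2pi)
    ultimately have "Ln z = Ln w + of_int (2 * n) * pi * \<i>"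
      using inj_on_log_phi_exp by (auto dest: inj_onD)
    then have "exp (Ln z) = exp (Ln w)" by (metis exp_eq)
    then show ?thesis using False by simp
  qed
qed

lemma open_phi_image: "U \<subseteq> ball 0 1 \<Longrightarrow> open U \<Longrightarrow> open (phi ` U)"
  by (rule open_mapping_thm3)
     (auto intro: holomorphic_on_subset[OF holomorphic_on_phi] inj_on_subset[OF inj_on_phi])

section \<open>\<open>phi\<close> on the unit circle\<close>

lemma Im_Ln_neg:
  assumes "Im z < 0"
  shows "-pi < Im (Ln z)" "Im (Ln z) < 0"
proof -
  have "z \<notin> \<real>\<^sub>\<le>\<^sub>0" using assms by (auto simp: complex_nonpos_Reals_iff)
  then have "Ln (cnj z) = cnj (Ln z)" by (simp add: cnj_Ln)
  then have "Im (Ln (cnj z)) = - Im (Ln z)" by simp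
  moreover have "0 < Im (Ln (cnj z))" "Im (Ln (cnj z)) < pi"
    using assms Im_Ln_pos_lt_imp[of "cnj z"] by auto
  ultimately show "-pi < Im (Ln z)" "Im (Ln z) < 0" by auto
qed

lemma norm_phi:
  "z \<noteq> \<i> \<Longrightarrow> norm (phi z) = norm z * exp (- ln (norm (z - \<i>)) - Im (Ln (z - \<i>)))"
  by (simp add: phi_def norm_mult algebra_simps)

lemma norm_phi_ge:
  assumes "norm z \<le> 1" "z \<noteq> \<i>"
  shows "norm z / norm (z - \<i>) \<le> norm (phi z)"
proof -
  have "Im (Ln (z - \<i>)) < 0"
    using Im_less_1_if_norm_le_1[OF assms] by (intro Im_Ln_neg) simp
  have "norm (z - \<i>) > 0" using assms by simp
  then have "norm z / norm (z - \<i>) = norm z * exp (- ln (norm (z - \<i>)))"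
    by (simp add: exp_minus field_simps)
  also have "\<dots> \<le> norm z * exp (- ln (norm (z - \<i>)) - Im (Ln (z - \<i>)))"
    using \<open>Im (Ln (z - \<i>)) < 0\<close> by (intro mult_left_mono) auto
  finally show ?thesis using norm_phi[OF assms(2)] by simp
qed

lemma norm_minus_i_ge_if_norm_phi_le:
  assumes "norm z \<le> 1" "z \<noteq> \<i>" "norm (phi z) \<le> M"
  shows "1 / (1 + M) \<le> norm (z - \<i>)"
proof -
  have pos: "norm (z - \<i>) > 0" using assms by simp
  have "M \<ge> 0" using assms(3) norm_ge_zero order_trans by blast
  have "1 \<le> norm z + norm (z - \<i>)"
    using norm_triangle_ineq4[of z "z - \<i>"] by simp
  moreover have "norm z / norm (z - \<i>) \<le> M"
    using norm_phi_ge[OF assms(1,2)] assms(3) by simp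
  then have "norm z \<le> M * norm (z - \<i>)" using pos by (simp add: divide_le_eq)
  ultimately have "1 \<le> (1 + M) * norm (z - \<i>)" by (simp add: algebra_simps)
  then show ?thesis using \<open>M \<ge> 0\<close> by (simp add: divide_le_eq mult.commute)
qed

lemma Ln_exp_i_minus_i:
  assumes "-3 * pi / 2 < \<theta>" "\<theta> < pi / 2"
  shows "Ln (exp (\<i> * of_real \<theta>) - \<i>)
    = of_real (ln (2 * sin (pi / 4 - \<theta> / 2))) - \<i> * of_real (pi / 4 - \<theta> / 2)"
proof -
  define u where "u = pi / 4 - \<theta> / 2"
  have u: "0 < u" "u < pi" using assms by (auto simp: u_def)
  have "sin u > 0" using sin_gt_zero[OF u] .
  have \<theta>: "\<theta> = pi / 2 - 2 * u" by (simp add: u_def)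
  have "cos \<theta> = 2 * sin u * cos u" unfolding \<theta> by (simp add: cos_diff sin_double)
  moreover have "sin \<theta> = 1 - 2 * (sin u)\<^sup>2" unfolding \<theta> by (simp add: sin_diff cos_double_sin)
  moreover have "exp (of_real (ln (2 * sin u)) - \<i> * of_real u)
      = exp (of_real (ln (2 * sin u)) + \<i> * of_real (- u))"
    by simp
  moreover have "Re (exp (of_real (ln (2 * sin u)) + \<i> * of_real (- u))) = 2 * sin u * cos u"
    "Im (exp (of_real (ln (2 * sin u)) + \<i> * of_real (- u))) = - 2 * sin u * sin u"
    using \<open>sin u > 0\<close> by (simp_all only: Re_exp Im_exp) simp_all
  ultimately have "exp (\<i> * of_real \<theta>) - \<i> = exp (of_real (ln (2 * sin u)) - \<i> * of_real u)"
    using \<open>sin u > 0\<close> by (simp add: complex_eq_iff Re_exp Im_exp power2_eq_square)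
  moreover have "Ln (exp (of_real (ln (2 * sin u)) - \<i> * of_real u))
      = of_real (ln (2 * sin u)) - \<i> * of_real u"
    using u by (intro Ln_exp) auto
  ultimately show ?thesis by (simp add: u_def)
qed

lemma Ln_1_minus_i: "Ln (1 - \<i>) = of_real (ln (sqrt 2)) - \<i> * of_real (pi / 4)"
  using Ln_exp_i_minus_i[of 0] by (simp add: sin_45)

lemma norm_phi_1: "norm (phi 1) = exp (pi / 4) / sqrt 2"
proof -
  have "norm (1 - \<i>) = sqrt 2" by (simp add: cmod_def)
  then show ?thesis using norm_phi[of 1] by (simp add: Ln_1_minus_i exp_diff)
qed

lemma sin_mul_exp_neg_less:
  assumes "0 < v" "v < pi" "v \<noteq> pi / 4"
  shows "sin v * exp (- v) < sin (pi / 4) * exp (- (pi / 4))"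
proof -
  define h where "h x = sin x * exp (- x)" for x :: real
  have h': "(h has_real_derivative sqrt 2 * sin (pi / 4 - x) * exp (- x)) (at x)" for x
  proof -
    have "cos x - sin x = sqrt 2 * sin (pi / 4 - x)"
      by (simp add: sin_diff sin_45 cos_45 algebra_simps)
    then show ?thesis unfolding h_def
      by (auto intro!: derivative_eq_intros simp: algebra_simps)
  qed
  show ?thesis
  proof (cases "v < pi / 4")
    case True
    have "h v < h (pi / 4)"
    proof (rule DERIV_pos_imp_increasing_open[OF True])
      fix x assume "v < x" "x < pi / 4"
      then have "sin (pi / 4 - x) > 0" using assms by (intro sin_gt_zero) auto
      then have "sqrt 2 * sin (pi / 4 - x) * exp (- x) > 0" by simp
      then show "\<exists>y. DERIV h x :> y \<and> 0 < y" using h' by blast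
    qed (use h' in \<open>meson DERIV_isCont continuous_at_imp_continuous_on\<close>)
    then show ?thesis by (simp add: h_def)
  next
    case False
    then have "pi / 4 < v" using assms by simp
    have "h v < h (pi / 4)"
    proof (rule DERIV_neg_imp_decreasing_open[OF \<open>pi / 4 < v\<close>])
      fix x assume "pi / 4 < x" "x < v"
      then have "sin (x - pi / 4) > 0" using assms by (intro sin_gt_zero) auto
      then have "sin (pi / 4 - x) < 0" by (metis minus_diff_eq neg_less_0_iff_less sin_minus)
      then have "sqrt 2 * sin (pi / 4 - x) * exp (- x) < 0" by (intro mult_neg_pos mult_pos_neg) auto
      then show "\<exists>y. DERIV h x :> y \<and> y < 0" using h' by blast
    qed (use h' in \<open>meson DERIV_isCont continuous_at_imp_continuous_on\<close>)
    then show ?thesis by (simp add: h_def)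
  qed
qed

text \<open>On the unit circle, \<open>|w - \<i>| = -2 sin \<beta>\<close> with \<open>\<beta> = arg (w - \<i>)\<close>, so
  \<open>|phi w| = exp v / (2 sin v)\<close> for \<open>v = -\<beta> \<in> (0, pi)\<close>, which is minimal exactly at \<open>v = pi/4\<close>.\<close>
lemma norm_phi_1_less_on_circle:
  assumes "norm w = 1" "w \<noteq> \<i>" "w \<noteq> 1"
  shows "norm (phi 1) < norm (phi w)"
proof -
  define \<rho> where "\<rho> = norm (w - \<i>)"
  define v where "v = - Im (Ln (w - \<i>))"
  have "w - \<i> \<noteq> 0" using assms by simp
  then have "\<rho> > 0" by (simp add: \<rho>_def)
  have "Im (w - \<i>) < 0" using Im_less_1_if_norm_le_1[of w] assms by simp
  then have v: "0 < v" "v < pi" using Im_Ln_neg[of "w - \<i>"] unfolding v_def by linarith+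
  have polar: "Re (w - \<i>) = \<rho> * cos v" "Im (w - \<i>) = - \<rho> * sin v"
    using \<open>w - \<i> \<noteq> 0\<close> Re_exp[of "Ln (w - \<i>)"] Im_exp[of "Ln (w - \<i>)"]
    by (simp_all add: \<rho>_def v_def)
  have "Re w = \<rho> * cos v" "Im w = 1 - \<rho> * sin v" using polar by simp_all
  moreover have "(Re w)\<^sup>2 + (Im w)\<^sup>2 = 1" using assms(1) by (metis cmod_power2 one_power2)
  ultimately have "(\<rho> * cos v)\<^sup>2 + (1 - \<rho> * sin v)\<^sup>2 = 1" by simp
  moreover have "(\<rho> * cos v)\<^sup>2 + (1 - \<rho> * sin v)\<^sup>2
      = \<rho>\<^sup>2 * ((sin v)\<^sup>2 + (cos v)\<^sup>2) - 2 * \<rho> * sin v + 1"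
    by algebra
  ultimately have "\<rho>\<^sup>2 - 2 * \<rho> * sin v = 0" by simp
  then have "\<rho> * (\<rho> - 2 * sin v) = 0" by (simp add: power2_eq_square algebra_simps)
  then have \<rho>: "\<rho> = 2 * sin v" using \<open>\<rho> > 0\<close> by simp
  have "v \<noteq> pi / 4"
  proof
    assume "v = pi / 4"
    have "Re (w - \<i>) = 1" "Im (w - \<i>) = -1"
      using polar \<rho> unfolding \<open>v = pi / 4\<close> by (simp_all add: sin_45 cos_45)
    with assms(3) show False by (simp add: complex_eq_iff)
  qed
  have "norm (phi w) = exp (v - ln \<rho>)"
    using norm_phi[OF assms(2)] assms(1) by (simp add: \<rho>_def v_def)
  also have "\<dots> = exp v / (2 * sin v)" using \<rho> \<open>\<rho> > 0\<close> by (simp add: exp_diff)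
  finally have "norm (phi w) = exp v / (2 * sin v)" .
  moreover have "norm (phi 1) = exp (pi / 4) / (2 * sin (pi / 4))"
    using norm_phi_1 by (simp add: sin_45)
  moreover have "inverse (sin (pi / 4) * exp (- (pi / 4))) < inverse (sin v * exp (- v))"
    using sin_mul_exp_neg_less[OF v \<open>v \<noteq> pi / 4\<close>] sin_gt_zero[OF v]
    by (intro less_imp_inverse_less) auto
  ultimately show ?thesis by (simp add: exp_minus field_simps)
qed

lemma Im_div_ray_minus_i:
  assumes "s > 0" "cos \<theta> > 0"
  defines "u \<equiv> exp (\<i> * of_real \<theta>)"
  shows "Im (u / (of_real s * u - \<i>)) = cos \<theta> / (s\<^sup>2 - 2 * s * sin \<theta> + 1)"
proof -
  define v where "v = of_real s * u"
  have v: "Re v = s * cos \<theta>" "Im v = s * sin \<theta>"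
    by (simp_all add: v_def u_def Re_exp Im_exp)
  define N where "N = (Re (v - \<i>))\<^sup>2 + (Im (v - \<i>))\<^sup>2"
  have "v - \<i> \<noteq> 0" using v assms by (auto simp: complex_eq_iff)
  then have "N > 0" unfolding N_def by (metis cmod_power2 zero_less_norm_iff zero_less_power)
  have N: "N = s\<^sup>2 - 2 * s * sin \<theta> + 1"
  proof -
    have "N = (s * cos \<theta>)\<^sup>2 + (s * sin \<theta> - 1)\<^sup>2" unfolding N_def using v by simp
    also have "\<dots> = s\<^sup>2 - 2 * s * sin \<theta> + 1" using sin_cos_squared_add[of \<theta>] by algebra
    finally show ?thesis .
  qed
  have Im_scale: "Im (of_real s * z) = s * Im z" for z by simp
  have "of_real s * (u / (of_real s * u - \<i>)) = v / (v - \<i>)" by (simp add: v_def)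
  then have "s * Im (u / (of_real s * u - \<i>)) = Im (v / (v - \<i>))"
    by (metis Im_scale)
  also have "\<dots> = (Im v * Re (v - \<i>) - Re v * Im (v - \<i>)) / N"
    unfolding N_def by (rule Im_divide)
  also have "Im v * Re (v - \<i>) - Re v * Im (v - \<i>) = Re v" by (simp add: algebra_simps)
  finally have "s * Im (u / (of_real s * u - \<i>)) = s * (cos \<theta> / N)"
    using v by (simp only: times_divide_eq_right)
  moreover have "s \<noteq> 0" using \<open>s > 0\<close> by simp
  ultimately have "Im (u / (of_real s * u - \<i>)) = cos \<theta> / N"
    by (metis mult_left_cancel times_divide_eq_right)
  then show ?thesis using N by simp
qed

section \<open>A harmonic function on the disc \<open>|w - 1 - \<i>| \<le> 1\<close>\<close>

lemma quadratic_neg_between: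
  fixes b c r s u :: real
  assumes "r < s" "s < u" "r\<^sup>2 + b * r + c \<le> 0" "u\<^sup>2 + b * u + c < 0"
  shows "s\<^sup>2 + b * s + c < 0"
proof -
  have "(u - r) * (s\<^sup>2 + b * s + c)
      = (u - s) * (r\<^sup>2 + b * r + c) + (s - r) * (u\<^sup>2 + b * u + c) + (u - r) * (s - r) * (s - u)"
    by (simp add: power2_eq_square algebra_simps)
  moreover have "(u - s) * (r\<^sup>2 + b * r + c) \<le> 0" using assms by (simp add: mult_nonneg_nonpos)
  moreover have "(s - r) * (u\<^sup>2 + b * u + c) < 0" using assms by (simp add: mult_pos_neg)
  moreover have "(u - r) * (s - r) * (s - u) < 0" using assms by (simp add: mult_pos_neg)
  ultimately have "(u - r) * (s\<^sup>2 + b * s + c) < 0" by linarith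
  then show ?thesis using assms by (simp add: mult_less_0_iff)
qed

lemma one_less_cos_add_sin:
  assumes "0 < \<theta>" "\<theta> < pi / 2"
  shows "1 < cos \<theta> + sin \<theta>"
proof -
  have cs: "cos \<theta> > 0" "sin \<theta> > 0" using assms by (auto intro!: cos_gt_zero sin_gt_zero)
  have sq: "(cos \<theta> + sin \<theta>)\<^sup>2 = 1 + 2 * cos \<theta> * sin \<theta>"
    using sin_cos_squared_add[of \<theta>] by algebra
  have "0 < 2 * cos \<theta> * sin \<theta>" using cs by simp
  then have "1\<^sup>2 < (cos \<theta> + sin \<theta>)\<^sup>2" unfolding sq by simp
  then show ?thesis using cs by (auto intro: power_less_imp_less_base)
qed

lemma has_real_derivative_ray_arg:
  assumes "cos \<theta> > 0" "s > 0"
  defines "u \<equiv> exp (\<i> * of_real \<theta>)"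
  shows "((\<lambda>s. ln s + \<theta> - 2 * Im (Ln (of_real s * u - \<i>))) has_real_derivative
    1 / s - 2 * Im (u / (of_real s * u - \<i>))) (at s)"
proof -
  have "Re (of_real s * u - \<i>) > 0" using assms by (simp add: u_def Re_exp)
  then have "of_real s * u - \<i> \<notin> \<real>\<^sub>\<le>\<^sub>0" by (auto simp: complex_nonpos_Reals_iff)
  then have "((Ln \<circ> (\<lambda>z. z * u - \<i>)) has_field_derivative
      inverse (of_real s * u - \<i>) * u) (at (of_real s))"
    by (intro DERIV_chain) (auto intro!: has_field_derivative_Ln derivative_eq_intros)
  then have "((\<lambda>s. Ln (of_real s * u - \<i>)) has_vector_derivative u / (of_real s * u - \<i>)) (at s)"
    unfolding o_def by (auto dest: has_vector_derivative_real_field simp: divide_inverse mult.commute)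
  then have "((\<lambda>s. 2 * Im (Ln (of_real s * u - \<i>))) has_real_derivative
      2 * Im (u / (of_real s * u - \<i>))) (at s)"
    by (intro DERIV_cmult has_vector_derivative_Im)
  moreover have "((\<lambda>x. ln x + \<theta>) has_real_derivative 1 / s) (at s)"
    using DERIV_add[OF DERIV_ln_divide[OF assms(2)] DERIV_const[of \<theta>]] by simp
  ultimately show ?thesis by (intro DERIV_diff)
qed

text \<open>Along the ray through \<open>w = r e^{\<i>\<theta>}\<close> the harmonic function
  \<open>ln |w| + arg w - 2 arg (w - \<i>)\<close> decreases while \<open>w\<close> stays in the disc \<open>|w - 1 - \<i>| \<le> 1\<close>,
  and equals \<open>pi/2\<close> on the unit circle.\<close>
lemma lens_ray_bound:
  assumes \<theta>: "0 < \<theta>" "\<theta> < pi / 2" and r: "0 < r" "r < 1"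
    and in_disc: "r\<^sup>2 - 2 * r * (cos \<theta> + sin \<theta>) + 1 \<le> 0"
  defines "u \<equiv> exp (\<i> * of_real \<theta>)"
  shows "pi / 2 < ln r + \<theta> - 2 * Im (Ln (of_real r * u - \<i>))"
proof -
  have "cos \<theta> > 0" using \<theta> by (intro cos_gt_zero) auto
  define f where "f s = ln s + \<theta> - 2 * Im (Ln (of_real s * u - \<i>))" for s :: real
  have f': "(f has_real_derivative 1 / s - 2 * Im (u / (of_real s * u - \<i>))) (at s)"
    if "s > 0" for s :: real
    unfolding f_def[abs_def] u_def by (rule has_real_derivative_ray_arg[OF \<open>cos \<theta> > 0\<close> that])
  have "f 1 < f r"
  proof (rule DERIV_neg_imp_decreasing_open[OF r(2)])
    fix s assume s: "r < s" "s < 1"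
    then have "s > 0" using r by simp
    define N where "N = s\<^sup>2 - 2 * s * sin \<theta> + 1"
    have "N = (s * cos \<theta>)\<^sup>2 + (1 - s * sin \<theta>)\<^sup>2"
      unfolding N_def using sin_cos_squared_add[of \<theta>] by algebra
    moreover have "s * cos \<theta> > 0" using \<open>s > 0\<close> \<open>cos \<theta> > 0\<close> by simp
    ultimately have "N > 0" by (metis add_pos_nonneg zero_less_power zero_le_power2)
    have "Im (u / (of_real s * u - \<i>)) = cos \<theta> / N"
      using Im_div_ray_minus_i[OF \<open>s > 0\<close> \<open>cos \<theta> > 0\<close>] by (simp add: u_def N_def)
    then have "1 / s - 2 * Im (u / (of_real s * u - \<i>)) = (N - 2 * s * cos \<theta>) / (s * N)"
      using \<open>s > 0\<close> \<open>N > 0\<close> by (simp add: field_simps)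
    also have "\<dots> = (s\<^sup>2 + (- 2 * (cos \<theta> + sin \<theta>)) * s + 1) / (s * N)"
      by (simp add: N_def algebra_simps)
    also have "\<dots> < 0"
    proof (rule divide_neg_pos)
      have "r\<^sup>2 + (- 2 * (cos \<theta> + sin \<theta>)) * r + 1 \<le> 0"
        using in_disc by (simp add: algebra_simps)
      moreover have "1\<^sup>2 + (- 2 * (cos \<theta> + sin \<theta>)) * 1 + 1 < 0"
        using one_less_cos_add_sin[OF \<theta>] by simp
      ultimately show "s\<^sup>2 + (- 2 * (cos \<theta> + sin \<theta>)) * s + 1 < 0"
        by (rule quadratic_neg_between[OF s])
    qed (use \<open>s > 0\<close> \<open>N > 0\<close> in simp)
    finally show "\<exists>y. DERIV f s :> y \<and> y < 0" using f'[OF \<open>s > 0\<close>] by blast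
  next
    show "continuous_on {r..1} f"
    proof (intro continuous_at_imp_continuous_on ballI)
      fix s assume "s \<in> {r..1}"
      then show "isCont f s" using f'[of s] r DERIV_isCont by auto
    qed
  qed
  moreover have "f 1 = pi / 2"
  proof -
    have "Ln (u - \<i>) = of_real (ln (2 * sin (pi / 4 - \<theta> / 2))) - \<i> * of_real (pi / 4 - \<theta> / 2)"
      unfolding u_def using \<theta> by (intro Ln_exp_i_minus_i) auto
    then show ?thesis by (simp add: f_def)
  qed
  ultimately show ?thesis by (simp add: f_def)
qed

lemma lens_bounds:
  assumes w: "w \<in> ball 0 1" and in_disc: "(Re w - 1)\<^sup>2 + (Im w - 1)\<^sup>2 \<le> 1"
  shows "pi / 2 < ln (norm w) + Im (Ln w) - 2 * Im (Ln (w - \<i>))"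
    and "ln (norm w) + Im (Ln w) - 2 * Im (Ln (w - \<i>)) < 3 * pi / 2"
proof -
  have "(Re w)\<^sup>2 + (Im w)\<^sup>2 < 1" using w
    by (metis cmod_power2 mem_ball_0 norm_ge_zero power_strict_mono one_power2 zero_less_numeral)
  moreover have "(Re w - 1)\<^sup>2 \<le> 1" "(Im w - 1)\<^sup>2 \<le> 1"
    using in_disc zero_le_power2[of "Re w - 1"] zero_le_power2[of "Im w - 1"] by linarith+
  then have "0 \<le> Re w" "0 \<le> Im w"
    using abs_le_square_iff[of "Re w - 1" 1] abs_le_square_iff[of "Im w - 1" 1] by (simp_all add: abs_le_iff)
  moreover have "Re w \<noteq> 0"
  proof
    assume "Re w = 0"
    then have "(Im w - 1)\<^sup>2 \<le> 0" using in_disc by simp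
    then have "Im w = 1" by simp
    with \<open>Re w = 0\<close> \<open>(Re w)\<^sup>2 + (Im w)\<^sup>2 < 1\<close> show False by simp
  qed
  moreover have "Im w \<noteq> 0"
  proof
    assume "Im w = 0"
    then have "(Re w - 1)\<^sup>2 \<le> 0" using in_disc by simp
    then have "Re w = 1" by simp
    with \<open>Im w = 0\<close> \<open>(Re w)\<^sup>2 + (Im w)\<^sup>2 < 1\<close> show False by simp
  qed
  ultimately have "Re w > 0" "Im w > 0" by simp_all
  define r where "r = norm w"
  define \<theta> where "\<theta> = Im (Ln w)"
  have "w \<noteq> 0" using \<open>Re w > 0\<close> by auto
  then have r: "0 < r" "r < 1" using w by (auto simp: r_def)
  have \<theta>: "0 < \<theta>" "\<theta> < pi / 2"
    using Im_Ln_pos_lt_imp[of w] Re_Ln_pos_lt_imp[of w] \<open>Re w > 0\<close> \<open>Im w > 0\<close>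
    by (auto simp: \<theta>_def)
  have w_polar: "w = of_real r * exp (\<i> * of_real \<theta>)"
  proof -
    have "Ln w = of_real (ln r) + \<i> * of_real \<theta>"
      using \<open>w \<noteq> 0\<close> by (simp add: complex_eq_iff r_def \<theta>_def)
    then have "w = exp (of_real (ln r) + \<i> * of_real \<theta>)" using \<open>w \<noteq> 0\<close> by (metis exp_Ln)
    moreover have "exp (of_real (ln r)) = of_real r" using r by (metis exp_of_real exp_ln)
    ultimately show ?thesis by (simp add: exp_add)
  qed
  then have "Re w = r * cos \<theta>" "Im w = r * sin \<theta>" by (simp_all add: Re_exp Im_exp)
  then have "(Re w - 1)\<^sup>2 + (Im w - 1)\<^sup>2 - 1 = r\<^sup>2 - 2 * r * (cos \<theta> + sin \<theta>) + 1"
    using sin_cos_squared_add[of \<theta>] by (simp only:) algebra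
  then have "r\<^sup>2 - 2 * r * (cos \<theta> + sin \<theta>) + 1 \<le> 0" using in_disc by linarith
  then have "pi / 2 < ln r + \<theta> - 2 * Im (Ln (w - \<i>))"
    using lens_ray_bound[OF \<theta> r] unfolding w_polar[symmetric] by blast
  then show "pi / 2 < ln (norm w) + Im (Ln w) - 2 * Im (Ln (w - \<i>))"
    by (simp add: r_def \<theta>_def)
  have "Re (w - \<i>) > 0" using \<open>Re w > 0\<close> by simp
  then have "\<bar>Im (Ln (w - \<i>))\<bar> < pi / 2" by (rule Re_Ln_pos_lt_imp)
  moreover have "ln (norm w) < 0" using r by (simp add: r_def)
  ultimately show "ln (norm w) + Im (Ln w) - 2 * Im (Ln (w - \<i>)) < 3 * pi / 2"
    using \<theta> by (simp add: \<theta>_def)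
qed

section \<open>Existence and regularity of the trace\<close>

text \<open>A neighbourhood of \<open>phi w\<^sub>0\<close> is covered by \<open>phi\<close> of a small ball around \<open>w\<^sub>0\<close>, which stays
  away from \<open>1\<close>; but by continuity it also contains \<open>phi (1 - s)\<close> for small \<open>s\<close>, contradicting
  injectivity.\<close>
lemma phi_1_notin_phi_ball: "phi 1 \<notin> phi ` ball 0 1"
proof
  assume "phi 1 \<in> phi ` ball 0 1"
  then obtain w\<^sub>0 where w\<^sub>0: "w\<^sub>0 \<in> ball 0 1" and eq: "phi w\<^sub>0 = phi 1" by auto
  define a where "a = norm (1 - w\<^sub>0)"
  have "a > 0" using w\<^sub>0 by (auto simp: a_def)
  define d where "d = min (1 - norm w\<^sub>0) (a / 2)"
  have "d > 0" using w\<^sub>0 \<open>a > 0\<close> by (simp add: d_def)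
  have sub: "ball w\<^sub>0 d \<subseteq> ball 0 1"
  proof
    fix x assume "x \<in> ball w\<^sub>0 d"
    then have "norm (x - w\<^sub>0) < 1 - norm w\<^sub>0" by (simp add: dist_norm d_def norm_minus_commute)
    moreover have "norm x \<le> norm w\<^sub>0 + norm (x - w\<^sub>0)" by (metis norm_triangle_ineq diff_add_cancel add.commute)
    ultimately show "x \<in> ball 0 1" by simp
  qed
  have "phi 1 \<in> phi ` ball w\<^sub>0 d" using eq \<open>d > 0\<close> by (metis centre_in_ball imageI)
  moreover have "open (phi ` ball w\<^sub>0 d)" by (rule open_phi_image[OF sub open_ball])
  ultimately obtain \<eta> where "\<eta> > 0" and \<eta>: "ball (phi 1) \<eta> \<subseteq> phi ` ball w\<^sub>0 d"
    by (meson open_contains_ball)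
  obtain \<epsilon> where "\<epsilon> > 0" and \<epsilon>: "\<And>y. dist y 1 < \<epsilon> \<Longrightarrow> dist (phi y) (phi 1) < \<eta>"
    using isCont_phi[of 1] \<open>\<eta> > 0\<close> unfolding continuous_at_eps_delta by fastforce
  define s where "s = min (\<epsilon> / 2) (a / 4)"
  have "a < 2" using norm_triangle_ineq4[of 1 w\<^sub>0] w\<^sub>0 by (simp add: a_def)
  then have s: "0 < s" "s < \<epsilon>" "s \<le> a / 4" "s < 1" using \<open>\<epsilon> > 0\<close> \<open>a > 0\<close> by (auto simp: s_def)
  define y where "y = complex_of_real (1 - s)"
  have "norm y = 1 - s" unfolding y_def norm_of_real using s by simp
  then have "y \<in> ball 0 1" using s by simp
  have "dist y 1 < \<epsilon>" using s by (simp add: y_def dist_norm)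
  then have "phi y \<in> ball (phi 1) \<eta>" using \<epsilon>[of y] by (simp add: dist_commute)
  then obtain v where v: "v \<in> ball w\<^sub>0 d" "phi y = phi v" using \<eta> by auto
  then have "v = y" using inj_onD[OF inj_on_phi] sub \<open>y \<in> ball 0 1\<close> by auto
  then have "norm (y - w\<^sub>0) < a / 2" using v(1) by (simp add: dist_norm d_def norm_minus_commute)
  moreover have "a \<le> norm (1 - y) + norm (y - w\<^sub>0)" unfolding a_def
    by (metis diff_add_cancel norm_triangle_ineq add_diff_eq)
  moreover have "norm (1 - y) = s" using s by (simp add: y_def)
  ultimately show False using s by linarith
qed

definition phi_trace :: "real \<Rightarrow> complex" where
  "phi_trace t = exp ((\<i> - 1) * of_real t) * phi 1"

lemma norm_phi_trace: "norm (phi_trace t) = exp (- t) * norm (phi 1)"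
  by (simp add: phi_trace_def norm_mult)

lemma continuous_on_phi_trace: "continuous_on S phi_trace"
  unfolding phi_trace_def by (intro continuous_intros)

lemma has_vector_derivative_phi_trace:
  "(phi_trace has_vector_derivative (\<i> - 1) * phi_trace t) (at t)"
proof -
  have "((\<lambda>z. exp ((\<i> - 1) * z) * phi 1) has_field_derivative
      exp ((\<i> - 1) * of_real t) * (\<i> - 1) * phi 1) (at (of_real t))"
    by (auto intro!: derivative_eq_intros)
  then have "(phi_trace has_vector_derivative exp ((\<i> - 1) * of_real t) * (\<i> - 1) * phi 1) (at t)"
    unfolding phi_trace_def[abs_def] by (rule has_vector_derivative_real_field)
  then show ?thesis by (simp add: phi_trace_def mult_ac)
qed

lemma phi_trace_tendsto_0: "(phi_trace \<longlongrightarrow> 0) at_top"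
proof -
  have "((\<lambda>t. exp (- t)) \<longlongrightarrow> (0::real)) at_top"
    by (rule filterlim_compose[OF exp_at_bot filterlim_uminus_at_bot_at_top])
  then have "((\<lambda>t. exp (- t) * norm (phi 1)) \<longlongrightarrow> 0 * norm (phi 1)) at_top"
    by (rule tendsto_mult_right)
  then have "((\<lambda>t. norm (phi_trace t)) \<longlongrightarrow> 0) at_top" by (simp add: norm_phi_trace)
  then show ?thesis by (rule tendsto_norm_zero_cancel)
qed

text \<open>By \<open>norm_minus_i_ge_if_norm_phi_le\<close>, this compact set contains every \<open>w\<close> of the closed
  disc with \<open>|phi w| \<le> |phi 1|\<close>.\<close>
definition phi_sublevel_hull :: "complex set" where
  "phi_sublevel_hull = cball 0 1 \<inter> {w. 1 / (1 + norm (phi 1)) \<le> norm (w - \<i>)}"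

lemma compact_phi_sublevel_hull: "compact phi_sublevel_hull"
  unfolding phi_sublevel_hull_def
  by (intro compact_Int_closed closed_Collect_le continuous_intros) auto

lemma phi_sublevel_hullD:
  assumes "w \<in> phi_sublevel_hull"
  shows "norm w \<le> 1" "w \<noteq> \<i>"
proof -
  have "0 < 1 / (1 + norm (phi 1))" by (intro divide_pos_pos add_pos_nonneg) auto
  moreover have "1 / (1 + norm (phi 1)) \<le> norm (w - \<i>)"
    using assms by (simp add: phi_sublevel_hull_def)
  ultimately show "w \<noteq> \<i>" by auto
  show "norm w \<le> 1" using assms by (simp add: phi_sublevel_hull_def)
qed

lemma phi_sublevel_hullI:
  "norm w \<le> 1 \<Longrightarrow> w \<noteq> \<i> \<Longrightarrow> norm (phi w) \<le> norm (phi 1) \<Longrightarrow> w \<in> phi_sublevel_hull"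
  using norm_minus_i_ge_if_norm_phi_le by (simp add: phi_sublevel_hull_def)

lemma continuous_on_phi_sublevel_hull: "continuous_on phi_sublevel_hull phi"
  by (intro continuous_at_imp_continuous_on ballI isCont_phi) (auto dest: phi_sublevel_hullD)

lemma phi_trace_in_phi_ball_iff:
  assumes "t > 0"
  shows "phi_trace t \<in> phi ` ball 0 1 \<longleftrightarrow> phi_trace t \<in> phi ` phi_sublevel_hull"
proof
  assume "phi_trace t \<in> phi ` ball 0 1"
  then obtain w where w: "w \<in> ball 0 1" "phi_trace t = phi w" by auto
  then have "norm (phi w) \<le> norm (phi 1)"
    using norm_phi_trace[of t] assms by (simp add: mult_left_le_one_le)
  then show "phi_trace t \<in> phi ` phi_sublevel_hull"
    using w by (auto intro!: phi_sublevel_hullI)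
next
  assume "phi_trace t \<in> phi ` phi_sublevel_hull"
  then obtain w where w: "w \<in> phi_sublevel_hull" "phi_trace t = phi w" by auto
  have less: "norm (phi w) < norm (phi 1)"
    using w assms norm_phi_trace[of t] by simp
  have "norm w \<le> 1" "w \<noteq> \<i>" using phi_sublevel_hullD[OF w(1)] by auto
  moreover have "norm w \<noteq> 1"
  proof
    assume "norm w = 1"
    moreover have "w \<noteq> 1" using less by auto
    ultimately have "norm (phi 1) < norm (phi w)"
      using \<open>w \<noteq> \<i>\<close> by (intro norm_phi_1_less_on_circle)
    with less show False by simp
  qed
  ultimately have "w \<in> ball 0 1" by simp
  then show "phi_trace t \<in> phi ` ball 0 1" using w by auto
qed

text \<open>The set of \<open>t > 0\<close> with \<open>phi_trace t \<in> phi ` ball 0 1\<close> is open, closed (by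
  \<open>phi_trace_in_phi_ball_iff\<close>, as a preimage of a compact set) and nonempty.\<close>
lemma phi_trace_in_phi_ball:
  assumes "t > 0"
  shows "phi_trace t \<in> phi ` ball 0 1"
proof -
  define A where "A = {0<..} \<inter> phi_trace -` (phi ` ball 0 1)"
  have "openin (top_of_set {0<..}) A"
    unfolding A_def
    by (intro open_subset continuous_open_preimage continuous_on_phi_trace open_phi_image) auto
  moreover have "A = {0<..} \<inter> phi_trace -` (phi ` phi_sublevel_hull)"
    by (rule set_eqI) (simp add: A_def phi_trace_in_phi_ball_iff cong: conj_cong)
  then have "closedin (top_of_set {0<..}) A"
    by (simp only:)
       (intro continuous_closedin_preimage continuous_on_phi_trace compact_imp_closed
         compact_continuous_image continuous_on_phi_sublevel_hull compact_phi_sublevel_hull)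
  moreover have "connected {0::real<..}" by (simp add: is_interval_connected)
  ultimately have "A = {} \<or> A = {0<..}" unfolding connected_clopen by blast
  moreover have "A \<noteq> {}"
  proof -
    have "0 \<in> phi ` ball 0 1" using imageI[of 0 "ball 0 1" phi] by simp
    then have "eventually (\<lambda>t. phi_trace t \<in> phi ` ball 0 1) at_top"
      by (rule topological_tendstoD[OF phi_trace_tendsto_0 open_phi_image[OF order_refl open_ball]])
    then have "eventually (\<lambda>t. t \<in> A) at_top"
      using eventually_gt_at_top[of 0] by eventually_elim (simp add: A_def)
    then show ?thesis by (auto simp: eventually_at_top_linorder)
  qed
  ultimately show ?thesis using assms by (auto simp: A_def)
qed

lemma gamma_in_ball: "t > 0 \<Longrightarrow> gamma t \<in> ball 0 1"
  and phi_gamma: "t > 0 \<Longrightarrow> phi (gamma t) = phi_trace t"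
  using inv_into_into[OF phi_trace_in_phi_ball] f_inv_into_f[OF phi_trace_in_phi_ball]
  by (simp_all add: gamma_def phi_trace_def)

lemma gamma_0 [simp]: "gamma 0 = 1"
  by (simp add: gamma_def)

lemma norm_gamma_le_1: "t \<ge> 0 \<Longrightarrow> norm (gamma t) \<le> 1"
  and gamma_neq_i: "t \<ge> 0 \<Longrightarrow> gamma t \<noteq> \<i>"
  using gamma_in_ball[of t] by (cases "t = 0"; force)+

lemma phi_1_separated:
  assumes "\<epsilon> > 0"
  obtains \<delta> where "\<delta> > 0"
    "\<And>w. w \<in> phi_sublevel_hull \<Longrightarrow> \<epsilon> \<le> dist w 1 \<Longrightarrow> \<delta> \<le> dist (phi 1) (phi w)"
proof -
  define K where "K = phi_sublevel_hull \<inter> {w. \<epsilon> \<le> dist w 1}"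
  have "compact K" unfolding K_def
    by (intro compact_Int_closed compact_phi_sublevel_hull closed_Collect_le continuous_intros)
  moreover have "continuous_on K phi"
    using continuous_on_phi_sublevel_hull by (rule continuous_on_subset) (simp add: K_def)
  ultimately have closed: "closed (phi ` K)" by (intro compact_imp_closed compact_continuous_image)
  have notin: "phi 1 \<notin> phi ` K"
  proof
    assume "phi 1 \<in> phi ` K"
    then obtain w where w: "w \<in> phi_sublevel_hull" "\<epsilon> \<le> dist w 1" "phi w = phi 1"
      by (auto simp: K_def)
    have "norm w \<le> 1" "w \<noteq> \<i>" using phi_sublevel_hullD[OF w(1)] by auto
    moreover have "w \<noteq> 1" using w(2) assms by auto
    moreover have "norm w \<noteq> 1" using norm_phi_1_less_on_circle w(3) calculation by force
    ultimately have "w \<in> ball 0 1" by simp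
    then show False using phi_1_notin_phi_ball w(3) by (metis imageI)
  qed
  obtain \<delta> where "\<delta> > 0" and \<delta>: "\<forall>x \<in> phi ` K. \<delta> \<le> dist (phi 1) x"
    using separate_point_closed[OF closed notin] by blast
  show ?thesis
  proof (rule that[OF \<open>\<delta> > 0\<close>])
    fix w assume "w \<in> phi_sublevel_hull" "\<epsilon> \<le> dist w 1"
    then have "phi w \<in> phi ` K" by (simp add: K_def)
    then show "\<delta> \<le> dist (phi 1) (phi w)" using \<delta> by blast
  qed
qed

lemma gamma_tendsto_1: "(gamma \<longlongrightarrow> 1) (at_right 0)"
proof (rule tendstoI)
  fix \<epsilon> :: real assume "\<epsilon> > 0"
  then obtain \<delta> where "\<delta> > 0" and
    \<delta>: "\<And>w. w \<in> phi_sublevel_hull \<Longrightarrow> \<epsilon> \<le> dist w 1 \<Longrightarrow> \<delta> \<le> dist (phi 1) (phi w)"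
    using phi_1_separated by blast
  have "(phi_trace \<longlongrightarrow> phi 1) (at_right 0)"
    using continuous_on_phi_trace[of UNIV]
    by (metis continuous_on_eq_continuous_at isCont_def open_UNIV phi_trace_def UNIV_I
        tendsto_within_subset top_greatest exp_zero mult_1 mult_zero_right of_real_0)
  then have "eventually (\<lambda>t. dist (phi_trace t) (phi 1) < \<delta>) (at_right 0)"
    using \<open>\<delta> > 0\<close> by (rule tendstoD)
  moreover have "eventually (\<lambda>t. t > (0::real)) (at_right 0)"
    by (simp add: eventually_at_right_less)
  ultimately show "eventually (\<lambda>t. dist (gamma t) 1 < \<epsilon>) (at_right 0)"
  proof eventually_elim
    case (elim t)
    have "norm (phi (gamma t)) \<le> norm (phi 1)"
      using elim phi_gamma norm_phi_trace[of t] by (simp add: mult_left_le_one_le)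
    then have "gamma t \<in> phi_sublevel_hull"
      using gamma_in_ball[OF \<open>t > 0\<close>] by (intro phi_sublevel_hullI) auto
    then show ?case
      using \<delta>[of "gamma t"] elim phi_gamma[OF \<open>t > 0\<close>] by (force simp: dist_commute)
  qed
qed

lemma has_vector_derivative_gamma:
  assumes "t > 0"
  shows "(gamma has_vector_derivative (\<i> - 1) * phi_trace t / phi' (gamma t)) (at t)"
proof -
  obtain g where g: "g holomorphic_on phi ` ball 0 1"
    "\<And>z. z \<in> ball 0 1 \<Longrightarrow> deriv phi z * deriv g (phi z) = 1"
    "\<And>z. z \<in> ball 0 1 \<Longrightarrow> g (phi z) = z"
    using holomorphic_has_inverse[OF holomorphic_on_phi open_ball inj_on_phi] by blast
  have "(g has_field_derivative deriv g (phi_trace t)) (at (phi_trace t))"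
    using g(1) open_phi_image[OF order_refl open_ball] phi_trace_in_phi_ball[OF assms]
    by (rule holomorphic_derivI)
  with has_vector_derivative_phi_trace
  have "((g \<circ> phi_trace) has_vector_derivative (\<i> - 1) * phi_trace t * deriv g (phi_trace t)) (at t)"
    by (rule field_vector_diff_chain_at)
  moreover have "deriv phi (gamma t) = phi' (gamma t)"
    using gamma_in_ball[OF assms]
    by (intro DERIV_imp_deriv has_field_derivative_phi minus_i_notin_nonpos_Reals_ball)
  then have "deriv g (phi_trace t) = 1 / phi' (gamma t)"
    using g(2)[OF gamma_in_ball[OF assms]] phi_gamma[OF assms]
    by (metis nonzero_eq_divide_eq mult.commute mult_zero_left zero_neq_one)
  ultimately have "((g \<circ> phi_trace) has_vector_derivative (\<i> - 1) * phi_trace t / phi' (gamma t)) (at t)"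
    by simp
  then show ?thesis
  proof (rule has_vector_derivative_transform_within_open)
    fix s :: real assume "s \<in> {0<..}"
    then show "(g \<circ> phi_trace) s = gamma s"
      using gamma_in_ball[of s] phi_gamma[of s] g(3) by (metis comp_apply greaterThan_iff)
  qed (use assms in auto)
qed

lemma continuous_on_gamma: "continuous_on {0..} gamma"
proof (clarsimp simp: continuous_on_eq_continuous_within)
  fix t :: real assume "0 \<le> t"
  show "continuous (at t within {0..}) gamma"
  proof (cases "t = 0")
    case True
    then show ?thesis using gamma_tendsto_1
      by (simp add: continuous_within at_within_Ici_at_right)
  next
    case False
    with \<open>0 \<le> t\<close> have "t > 0" by simp
    then show ?thesis
      using has_vector_derivative_gamma has_vector_derivative_continuous
        continuous_at_imp_continuous_within by blast
  qed
qed

section \<open>Logarithmic coordinates of the trace\<close>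

text \<open>Obtained by taking logarithms in \<open>phi (gamma t) = exp ((\<i> - 1) t) phi 1\<close>.\<close>
definition gamma_log :: "real \<Rightarrow> complex" where
  "gamma_log t = (\<i> - 1) * (of_real t + Ln (1 - \<i>) - Ln (gamma t - \<i>))"

definition log_velocity :: "complex \<Rightarrow> complex" where
  "log_velocity w = (\<i> - 1) + 2 * w / (w - 1)"

lemma gamma_log_0 [simp]: "gamma_log 0 = 0"
  by (simp add: gamma_log_def)

lemma exp_gamma_log:
  assumes "t \<ge> 0"
  shows "exp (gamma_log t) = gamma t"
proof (cases "t = 0")
  case False
  with assms have "t > 0" by simp
  define w where "w = gamma t"
  define X where "X = exp ((\<i> - 1) * Ln (w - \<i>))"
  have "X \<noteq> 0" by (simp add: X_def)
  have "w * X = exp ((\<i> - 1) * of_real t) * exp ((\<i> - 1) * Ln (1 - \<i>))"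
    using phi_gamma[OF \<open>t > 0\<close>] by (simp add: phi_def phi_trace_def X_def w_def)
  then have "w = exp ((\<i> - 1) * of_real t) * exp ((\<i> - 1) * Ln (1 - \<i>)) / X"
    using \<open>X \<noteq> 0\<close> by (simp add: eq_divide_eq)
  also have "\<dots> = exp (gamma_log t)"
    by (simp add: gamma_log_def X_def w_def exp_add exp_diff algebra_simps)
  finally show ?thesis by (simp add: w_def)
qed simp

lemma gamma_minus_i_notin_nonpos_Reals: "t \<ge> 0 \<Longrightarrow> gamma t - \<i> \<notin> \<real>\<^sub>\<le>\<^sub>0"
  by (intro minus_i_notin_nonpos_Reals norm_gamma_le_1 gamma_neq_i)

lemma continuous_on_gamma_log: "continuous_on {0..} gamma_log"
  unfolding gamma_log_def
  by (intro continuous_intros continuous_on_gamma) (auto simp: gamma_minus_i_notin_nonpos_Reals)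

lemma log_velocity_eq:
  assumes "w \<in> ball 0 1"
  shows "(\<i> - 1) * (1 - (\<i> - 1) * phi w / phi' w / (w - \<i>)) = log_velocity w"
proof -
  have "w - \<i> \<noteq> 0" "w - 1 \<noteq> 0" using assms by auto
  define X where "X = exp ((\<i> - 1) * Ln (w - \<i>))"
  have "X \<noteq> 0" by (simp add: X_def)
  define A where "A = \<i> * (w - 1)"
  have "A \<noteq> 0" using \<open>w - 1 \<noteq> 0\<close> by (simp add: A_def)
  have "phi' w = X * (A / (w - \<i>))"
    using \<open>w - \<i> \<noteq> 0\<close> by (simp add: phi'_def X_def A_def field_simps)
  then have "(\<i> - 1) * phi w / phi' w / (w - \<i>) = (\<i> - 1) * (w * X) / (X * (A / (w - \<i>))) / (w - \<i>)"
    by (simp only: phi_def X_def)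
  also have "\<dots> = (\<i> - 1) * w / A"
    using \<open>X \<noteq> 0\<close> \<open>w - \<i> \<noteq> 0\<close> \<open>A \<noteq> 0\<close> by (simp add: field_simps)
  also have "\<dots> = (\<i> - 1) * w / (\<i> * (w - 1))" by (simp add: A_def)
  finally have "(\<i> - 1) * (1 - (\<i> - 1) * phi w / phi' w / (w - \<i>))
      = (\<i> - 1) * (1 - (\<i> - 1) * w / (\<i> * (w - 1)))"
    by (simp only:)
  also have "\<dots> = log_velocity w"
    using \<open>w - 1 \<noteq> 0\<close> by (simp add: log_velocity_def divide_simps) (simp add: algebra_simps)
  finally show ?thesis .
qed

lemma has_vector_derivative_gamma_log:
  assumes "t > 0"
  shows "(gamma_log has_vector_derivative log_velocity (gamma t)) (at t)"
proof -
  define w where "w = gamma t"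
  have "w \<in> ball 0 1" using gamma_in_ball[OF assms] by (simp add: w_def)
  define w' where "w' = (\<i> - 1) * phi_trace t / phi' w"
  have "((\<lambda>s. gamma s - \<i>) has_vector_derivative w') (at t)"
    using has_vector_derivative_gamma[OF assms]
    by (auto intro: has_vector_derivative_diff [where g' = 0, simplified] simp: w'_def w_def)
  then have "((Ln \<circ> (\<lambda>s. gamma s - \<i>)) has_vector_derivative w' * inverse (w - \<i>)) (at t)"
    using has_field_derivative_Ln[OF minus_i_notin_nonpos_Reals_ball[OF \<open>w \<in> ball 0 1\<close>]]
    unfolding w_def by (rule field_vector_diff_chain_at)
  then have "(gamma_log has_vector_derivative (\<i> - 1) * (1 - w' / (w - \<i>))) (at t)"
    unfolding gamma_log_def[abs_def] o_def
    by (auto intro!: derivative_eq_intros has_vector_derivative_mult_right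
        simp: divide_inverse has_vector_derivative_def[symmetric])
  moreover have "phi_trace t = phi w" using phi_gamma[OF assms] by (simp add: w_def)
  then have "(\<i> - 1) * (1 - w' / (w - \<i>)) = log_velocity w"
    unfolding w'_def using log_velocity_eq[OF \<open>w \<in> ball 0 1\<close>] by simp
  ultimately show ?thesis by (simp add: w_def)
qed

lemma Re_log_velocity_neg:
  assumes "norm w < 1"
  shows "Re (log_velocity w) < 0"
proof -
  define N where "N = (Re w - 1)\<^sup>2 + (Im w)\<^sup>2"
  have "w \<noteq> 1" using assms by auto
  then have "N > 0" by (simp add: N_def complex_eq_iff sum_power2_gt_zero_iff)
  have "Re (log_velocity w) = -1 + 2 * ((Re w)\<^sup>2 - Re w + (Im w)\<^sup>2) / N"
    by (simp add: log_velocity_def N_def Re_divide power2_eq_square algebra_simps)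
  also have "\<dots> = (2 * ((Re w)\<^sup>2 - Re w + (Im w)\<^sup>2) - N) / N"
    using \<open>N > 0\<close> by (simp add: diff_divide_distrib)
  also have "\<dots> = ((Re w)\<^sup>2 + (Im w)\<^sup>2 - 1) / N"
    by (simp add: N_def power2_eq_square algebra_simps)
  also have "\<dots> < 0"
  proof (rule divide_neg_pos)
    show "(Re w)\<^sup>2 + (Im w)\<^sup>2 - 1 < 0" using assms
      by (metis cmod_power2 diff_less_0_iff_less norm_ge_zero power_strict_mono one_power2
          zero_less_numeral)
  qed (rule \<open>N > 0\<close>)
  finally show ?thesis .
qed

lemma Im_log_velocity_pos:
  assumes "(Re w - 1)\<^sup>2 + (Im w - 1)\<^sup>2 > 1"
  shows "Im (log_velocity w) > 0"
proof -
  define N where "N = (Re w - 1)\<^sup>2 + (Im w)\<^sup>2"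
  have "w \<noteq> 1" using assms by auto
  then have "N > 0" by (simp add: N_def complex_eq_iff sum_power2_gt_zero_iff)
  have "Im (log_velocity w) = 1 - 2 * Im w / N"
    by (simp add: log_velocity_def N_def Im_divide power2_eq_square algebra_simps)
  also have "\<dots> = (N - 2 * Im w) / N"
    using \<open>N > 0\<close> by (simp add: diff_divide_distrib)
  also have "\<dots> = ((Re w - 1)\<^sup>2 + (Im w - 1)\<^sup>2 - 1) / N"
    by (simp add: N_def power2_eq_square algebra_simps)
  also have "\<dots> > 0" using assms \<open>N > 0\<close> by simp
  finally show ?thesis .
qed

lemma Re_gamma_log:
  "t \<ge> 0 \<Longrightarrow> Re (gamma_log t)
    = - t - ln (sqrt 2) + ln (norm (gamma t - \<i>)) + pi / 4 + Im (Ln (gamma t - \<i>))"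
  and Im_gamma_log:
  "t \<ge> 0 \<Longrightarrow> Im (gamma_log t)
    = t + ln (sqrt 2) - ln (norm (gamma t - \<i>)) + pi / 4 + Im (Ln (gamma t - \<i>))"
  using gamma_neq_i[of t] by (simp_all add: gamma_log_def Ln_1_minus_i algebra_simps)

lemma norm_gamma_minus_i_le_2: "t \<ge> 0 \<Longrightarrow> norm (gamma t - \<i>) \<le> 2"
  using norm_triangle_ineq4[of "gamma t" \<i>] norm_gamma_le_1[of t] by simp

lemma ln_norm_gamma_minus_i_le: "t \<ge> 0 \<Longrightarrow> ln (norm (gamma t - \<i>)) \<le> ln 2"
  using norm_gamma_minus_i_le_2[of t] gamma_neq_i[of t] by simp

lemma Re_gamma_log_le:
  assumes "t \<ge> 0"
  shows "Re (gamma_log t) \<le> - t + (ln 2 - ln (sqrt 2) + pi / 4 + pi)"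
proof -
  have "gamma t - \<i> \<noteq> 0" using gamma_neq_i[OF assms] by simp
  then have "Im (Ln (gamma t - \<i>)) \<le> pi" by (rule Im_Ln_le_pi)
  then show ?thesis using Re_gamma_log[OF assms] ln_norm_gamma_minus_i_le[OF assms] by linarith
qed

lemma Im_gamma_log_ge:
  assumes "t \<ge> 0"
  shows "t + (ln (sqrt 2) - ln 2 + pi / 4 - pi) \<le> Im (gamma_log t)"
proof -
  have "gamma t - \<i> \<noteq> 0" using gamma_neq_i[OF assms] by simp
  then have "- pi < Im (Ln (gamma t - \<i>))" by (rule mpi_less_Im_Ln)
  then show ?thesis using Im_gamma_log[OF assms] ln_norm_gamma_minus_i_le[OF assms] by linarith
qed

text \<open>By \<open>Re_gamma_log\<close> and \<open>Im_gamma_log\<close>, \<open>ln |\<gamma>| + arg \<gamma> - 2 arg (\<gamma> - \<i>) = pi/2\<close>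
  modulo \<open>2 pi\<close>, which \<open>lens_bounds\<close> rules out inside the disc \<open>|w - 1 - \<i>| \<le> 1\<close>.\<close>
lemma gamma_outside_disc:
  assumes "t > 0"
  shows "(Re (gamma t) - 1)\<^sup>2 + (Im (gamma t) - 1)\<^sup>2 > 1"
proof (rule ccontr)
  define w where "w = gamma t"
  assume "\<not> ?thesis"
  then have in_disc: "(Re w - 1)\<^sup>2 + (Im w - 1)\<^sup>2 \<le> 1" by (simp add: w_def)
  have w: "w = exp (gamma_log t)" using exp_gamma_log assms by (simp add: w_def)
  then have "w \<noteq> 0" by simp
  have "exp (Ln w) = exp (gamma_log t)" using \<open>w \<noteq> 0\<close> w by simp
  then obtain n :: int where "Ln w = gamma_log t + of_int (2 * n) * pi * \<i>"
    using exp_eq by blast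
  then have "Im (Ln w) = Im (gamma_log t) + 2 * n * pi" by simp
  moreover have "ln (norm w) = Re (gamma_log t)" using w by simp
  moreover have "Re (gamma_log t) + Im (gamma_log t) = pi / 2 + 2 * Im (Ln (w - \<i>))"
    using Re_gamma_log[of t] Im_gamma_log[of t] assms by (simp add: w_def)
  ultimately have "ln (norm w) + Im (Ln w) - 2 * Im (Ln (w - \<i>)) = pi / 2 + 2 * n * pi"
    by simp
  moreover have "w \<in> ball 0 1" using gamma_in_ball assms by (simp add: w_def)
  ultimately have "pi / 2 < pi / 2 + 2 * n * pi" "pi / 2 + 2 * n * pi < 3 * pi / 2"
    using lens_bounds[OF _ in_disc] by auto
  then have "0 < n" "n < 1" by (simp_all add: zero_less_mult_iff mult_less_cancel_right)
  then show False by simp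
qed

lemma norm_gamma: "t \<ge> 0 \<Longrightarrow> norm (gamma t) = exp (Re (gamma_log t))"
  by (metis exp_gamma_log norm_exp_eq_Re)

lemma gamma_polar:
  assumes "t \<ge> 0"
  shows "gamma t = of_real (norm (gamma t)) * exp (\<i> * of_real (Im (gamma_log t)))"
proof -
  have "gamma_log t = of_real (Re (gamma_log t)) + \<i> * of_real (Im (gamma_log t))"
    by (simp add: complex_eq_iff)
  then have "gamma t = exp (of_real (Re (gamma_log t)) + \<i> * of_real (Im (gamma_log t)))"
    using exp_gamma_log[OF assms] by metis
  then have "gamma t = of_real (exp (Re (gamma_log t))) * exp (\<i> * of_real (Im (gamma_log t)))"
    by (simp add: exp_add exp_of_real)
  then show ?thesis unfolding norm_gamma[OF assms] .
qed

lemma norm_gamma_strict_decreasing: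
  assumes "0 \<le> s" "s < t"
  shows "norm (gamma t) < norm (gamma s)"
proof -
  have "Re (gamma_log t) < Re (gamma_log s)"
  proof (rule DERIV_neg_imp_decreasing_open[OF assms(2)])
    fix x assume "s < x" "x < t"
    then have "x > 0" using assms by simp
    then show "\<exists>y. ((\<lambda>x. Re (gamma_log x)) has_real_derivative y) (at x) \<and> y < 0"
      using has_vector_derivative_Re[OF has_vector_derivative_gamma_log]
        Re_log_velocity_neg gamma_in_ball by fastforce
  next
    show "continuous_on {s..t} (\<lambda>x. Re (gamma_log x))"
      using assms by (intro continuous_intros continuous_on_subset[OF continuous_on_gamma_log]) auto
  qed
  then show ?thesis using assms by (simp add: norm_gamma)
qed

lemma norm_gamma_tendsto_0: "((\<lambda>t. norm (gamma t)) \<longlongrightarrow> 0) at_top"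
proof -
  define C where "C = ln 2 - ln (sqrt 2) + pi / 4 + pi"
  have ev: "eventually (\<lambda>t. norm (norm (gamma t)) \<le> exp (- t) * exp C) at_top"
    using eventually_ge_at_top[of 0]
  proof eventually_elim
    case (elim t)
    then show ?case using Re_gamma_log_le[of t] by (simp add: norm_gamma C_def flip: exp_add)
  qed
  have "((\<lambda>t. exp (- t)) \<longlongrightarrow> (0::real)) at_top"
    by (rule filterlim_compose[OF exp_at_bot filterlim_uminus_at_bot_at_top])
  then have "((\<lambda>t. exp (- t) * exp C) \<longlongrightarrow> 0 * exp C) at_top" by (rule tendsto_mult_right)
  then have "((\<lambda>t. exp (- t) * exp C) \<longlongrightarrow> 0) at_top" by simp
  with ev show ?thesis by (rule Lim_null_comparison)
qed

lemma Im_gamma_log_has_pos_derivative: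
  assumes "t > 0"
  shows "((\<lambda>s. Im (gamma_log s)) has_real_derivative Im (log_velocity (gamma t))) (at t)"
    and "Im (log_velocity (gamma t)) > 0"
  using has_vector_derivative_Im[OF has_vector_derivative_gamma_log[OF assms]]
    Im_log_velocity_pos[OF gamma_outside_disc[OF assms]]
  by auto

lemma Im_gamma_log_strict_mono:
  assumes "0 \<le> s" "s < t"
  shows "Im (gamma_log s) < Im (gamma_log t)"
proof (rule DERIV_pos_imp_increasing_open[OF assms(2)])
  fix x assume "s < x" "x < t"
  then show "\<exists>y. ((\<lambda>x. Im (gamma_log x)) has_real_derivative y) (at x) \<and> y > 0"
    using Im_gamma_log_has_pos_derivative[of x] assms by auto
next
  show "continuous_on {s..t} (\<lambda>x. Im (gamma_log x))"
    using assms by (intro continuous_intros continuous_on_subset[OF continuous_on_gamma_log]) auto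
qed

lemma filterlim_Im_gamma_log: "filterlim (\<lambda>t. Im (gamma_log t)) at_top at_top"
proof (rule filterlim_at_top_mono)
  define C where "C = ln (sqrt 2) - ln 2 + pi / 4 - pi"
  show "filterlim (\<lambda>t. C + t) at_top at_top"
    by (rule filterlim_tendsto_add_at_top[OF tendsto_const filterlim_ident])
  show "eventually (\<lambda>t. C + t \<le> Im (gamma_log t)) at_top"
    using eventually_ge_at_top[of 0]
  proof eventually_elim
    case (elim t)
    then show ?case using Im_gamma_log_ge[of t] unfolding C_def by linarith
  qed
qed

lemma continuous_on_Ints_valued_const:
  fixes h :: "'a::topological_space \<Rightarrow> real"
  assumes "connected S" "continuous_on S h" "\<And>x. x \<in> S \<Longrightarrow> h x \<in> \<int>"
  shows "h constant_on S"
proof (rule continuous_discrete_range_constant[OF assms(1,2)])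
  fix x assume "x \<in> S"
  show "\<exists>e>0. \<forall>y. y \<in> S \<and> h y \<noteq> h x \<longrightarrow> e \<le> norm (h y - h x)"
  proof (intro exI[of _ 1] conjI allI impI)
    fix y assume y: "y \<in> S \<and> h y \<noteq> h x"
    obtain m n where m: "h y = of_int m" and n: "h x = of_int n"
      using assms(3) y \<open>x \<in> S\<close> by (metis Ints_cases)
    then have "1 \<le> \<bar>m - n\<bar>" using y by auto
    then show "1 \<le> norm (h y - h x)" using m n by (simp flip: of_int_diff)
  qed simp
qed

lemma argument_eq_Im_gamma_log:
  assumes cont: "continuous_on {0..} \<Theta>" and "\<Theta> 0 = 0"
    and polar: "\<And>t. t \<ge> 0 \<Longrightarrow> gamma t = of_real (norm (gamma t)) * exp (\<i> * of_real (\<Theta> t))"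
    and "t \<ge> 0"
  shows "\<Theta> t = Im (gamma_log t)"
proof -
  define h where "h t = (\<Theta> t - Im (gamma_log t)) / (2 * pi)" for t
  have "h t \<in> \<int>" if "t \<ge> 0" for t
  proof -
    have "gamma t \<noteq> 0" using exp_gamma_log[OF that] by auto
    then have "exp (\<i> * of_real (\<Theta> t)) = exp (\<i> * of_real (Im (gamma_log t)))"
      using polar[OF that] gamma_polar[OF that] by (metis mult_cancel_left of_real_eq_0_iff norm_eq_zero)
    then obtain n :: int where "\<i> * of_real (\<Theta> t) = \<i> * of_real (Im (gamma_log t)) + of_int (2 * n) * pi * \<i>"
      using exp_eq by blast
    then have "h t = of_int n" by (simp add: h_def complex_eq_iff field_simps)
    then show ?thesis by simp
  qed
  moreover have "continuous_on {0..} h" unfolding h_def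
    by (intro continuous_intros cont continuous_on_gamma_log) simp
  ultimately have "h constant_on {0..}"
    by (intro continuous_on_Ints_valued_const) (auto simp: is_interval_connected)
  then have "h t = h 0" using \<open>t \<ge> 0\<close> by (auto simp: constant_on_def)
  then show ?thesis using \<open>\<Theta> 0 = 0\<close> by (simp add: h_def)
qed

lemma argument_of_gamma:
  assumes "continuous_on {0..} \<Theta>" "\<Theta> 0 = 0"
    and "\<forall>t\<ge>0. gamma t = of_real (norm (gamma t)) * exp (\<i> * of_real (\<Theta> t))"
  shows "\<forall>s t. 0 \<le> s \<longrightarrow> s < t \<longrightarrow> \<Theta> s < \<Theta> t"
    and "\<forall>t>0. \<exists>d>0. (\<Theta> has_real_derivative d) (at t)"
    and "filterlim \<Theta> at_top at_top"
proof -
  have \<Theta>: "\<Theta> t = Im (gamma_log t)" if "t \<ge> 0" for t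
    using argument_eq_Im_gamma_log assms that by blast
  show "\<forall>s t. 0 \<le> s \<longrightarrow> s < t \<longrightarrow> \<Theta> s < \<Theta> t"
    using Im_gamma_log_strict_mono by (simp add: \<Theta>)
  show "\<forall>t>0. \<exists>d>0. (\<Theta> has_real_derivative d) (at t)"
  proof (intro allI impI)
    fix t :: real assume "t > 0"
    have "(\<Theta> has_real_derivative Im (log_velocity (gamma t))) (at t)"
    proof (rule has_field_derivative_transform_within_open[where S = "{0<..}"])
      show "((\<lambda>s. Im (gamma_log s)) has_real_derivative Im (log_velocity (gamma t))) (at t)"
        using \<open>t > 0\<close> by (rule Im_gamma_log_has_pos_derivative)
    qed (use \<open>t > 0\<close> \<Theta> in auto)
    then show "\<exists>d>0. (\<Theta> has_real_derivative d) (at t)"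
      using Im_gamma_log_has_pos_derivative(2)[OF \<open>t > 0\<close>] by blast
  qed
  have "eventually (\<lambda>t. Im (gamma_log t) = \<Theta> t) at_top"
    using eventually_ge_at_top[of 0] by eventually_elim (simp add: \<Theta>)
  from filterlim_cong[OF refl refl this] filterlim_Im_gamma_log
  show "filterlim \<Theta> at_top at_top" by (rule iffD1)
qed

theorem proposition3p1:
  fixes r :: "real \<Rightarrow> real"
  defines "r \<equiv> (\<lambda>t. cmod (gamma t))"
  shows "(\<exists>\<Theta>. continuous_on {0..} \<Theta> \<and> \<Theta> 0 = 0 \<and>
            (\<forall>t\<ge>0. gamma t = complex_of_real (r t) * exp (\<i> * complex_of_real (\<Theta> t))))
      \<and> (\<forall>s t. 0 \<le> s \<longrightarrow> s < t \<longrightarrow> r t < r s)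
      \<and> (r \<longlongrightarrow> 0) at_top
      \<and> (\<forall>\<Theta>. continuous_on {0..} \<Theta> \<and> \<Theta> 0 = 0 \<and>
            (\<forall>t\<ge>0. gamma t = complex_of_real (r t) * exp (\<i> * complex_of_real (\<Theta> t)))
          \<longrightarrow> (\<forall>s t. 0 \<le> s \<longrightarrow> s < t \<longrightarrow> \<Theta> s < \<Theta> t)
            \<and> (\<forall>t>0. \<exists>d>0. (\<Theta> has_real_derivative d) (at t))
            \<and> filterlim \<Theta> at_top at_top)"
  unfolding r_def
proof (intro conjI allI impI)
  show "\<exists>\<Theta>. continuous_on {0..} \<Theta> \<and> \<Theta> 0 = 0 \<and>
      (\<forall>t\<ge>0. gamma t = of_real (norm (gamma t)) * exp (\<i> * of_real (\<Theta> t)))"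
    using gamma_polar
    by (intro exI[of _ "\<lambda>t. Im (gamma_log t)"]) (auto intro: continuous_intros continuous_on_gamma_log)
  show "norm (gamma t) < norm (gamma s)" if "0 \<le> s" "s < t" for s t
    using that by (rule norm_gamma_strict_decreasing)
  show "((\<lambda>t. norm (gamma t)) \<longlongrightarrow> 0) at_top"
    by (rule norm_gamma_tendsto_0)
qed (use argument_of_gamma in blast)+

end
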